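(* Let $\mathcal{F}$ be the star-shaped frame described below, let $d_i$ be a domain, and let $p$ be a $d_i$-purge function. If $\mathcal{F}$ is $p$-noninterfering ($\mathcal{F}\in\mathrm{NI}^p$), then $\mathcal{F}$ is $p$-nondeducible ($\mathcal{F}\in\mathrm{ND}^p$).
   Context: Frames and executions: a frame has locations, channels (each with a sender and recipient location) and data values; each location $\ell$ has a prefix-closed set $\mathrm{traces}(\ell)$ of finite or infinite sequences of labels (channel, data) over channels incident to $\ell$. Events come from a set $E$ with functions $\mathrm{chan}$, $\mathrm{msg}$; a system of events $(B,\preceq)$ ($B\subseteq E$, $\preceq$ a partial order with finitely many predecessors per event) is an execution ($\in\mathrm{exec}(\mathcal{F})$) iff for each location the events on its incident channels are linearly ordered and, as a label sequence, belong to its trace set. $\mathcal{A}|_C$ keeps the events whose channel is in $C$, with the restricted order. $J_C^{C'}(\mathcal{B})=\{\mathcal{A}|_{C'}:\mathcal{A}\in\mathrm{exec}(\mathcal{F}),\ \mathcal{A}|_C=\mathcal{B}\}$. Setting: a finite set of domains $\{d_1,\dots,d_k\}$ with a reflexive relation $\hookrightarrow$ on it; $\mathcal{F}$ has locations $d_1,\dots,d_k,M$ and channels $c_j^{\mathrm{in}}$ (sender $d_j$, recipient $M$) and $c_j^{\mathrm{out}}$ (sender $M$, recipient $d_j$), $1\le j\le k$, with given trace sets (e.g. induced by a possibly nondeterministic state machine at $M$). Let $C_i=\{c_i^{\mathrm{in}},c_i^{\mathrm{out}}\}$, $\mathrm{vis}(d_i)=\{c_j^{\mathrm{in}}:d_j\hookrightarrow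 d_i\}$, $\mathsf{IN}=\{c_j^{\mathrm{in}}:1\le j\le k\}$, $\mathrm{inp}(\mathcal{A})=\mathcal{A}|_{\mathsf{IN}}$. A $d_i$-purge function is a function $p$ from $\mathrm{exec}(\mathcal{F})$ to some set such that (1) $\mathrm{inp}(\mathcal{A})=\mathrm{inp}(\mathcal{A}')$ implies $p(\mathcal{A})=p(\mathcal{A}')$, and (2) $p(\mathcal{A})=p(\mathcal{A}')$ implies $\mathcal{A}|_{\mathrm{vis}(d_i)}=\mathcal{A}'|_{\mathrm{vis}(d_i)}$. $\mathcal{F}\in\mathrm{NI}^p$ iff for all $\mathcal{A},\mathcal{A}'\in\mathrm{exec}(\mathcal{F})$, $p(\mathcal{A})=p(\mathcal{A}')$ implies $\mathcal{A}|_{C_i}=\mathcal{A}'|_{C_i}$. $\mathcal{F}\in\mathrm{ND}^p$ iff for all $\mathcal{A},\mathcal{A}'\in\mathrm{exec}(\mathcal{F})$, $p(\mathcal{A})=p(\mathcal{A}')$ implies $\mathcal{A}'|_{\mathsf{IN}}\in J_{C_i}^{\mathsf{IN}}(\mathcal{A}|_{C_i})$. *)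

theory Defs
  imports Main
begin

datatype 'd loc = Dom 'd | Mloc
datatype 'd chan = CIn 'd | COut 'd

fun sender :: "'d chan \<Rightarrow> 'd loc" where
  "sender (CIn j) = Dom j"
| "sender (COut j) = Mloc"

fun recipient :: "'d chan \<Rightarrow> 'd loc" where
  "recipient (CIn j) = Mloc"
| "recipient (COut j) = Dom j"

definition incident :: "'d loc \<Rightarrow> 'd chan set" where
  "incident l = {c. sender c = l \<or> recipient c = l}"

text \<open>Finite or infinite sequences of labels: a function into option that is
  None from the length onwards (infinite sequences are never None).\<close>
definition is_seq :: "(nat \<Rightarrow> 'l option) \<Rightarrow> bool" where
  "is_seq s \<longleftrightarrow> (\<forall>i. s i = None \<longrightarrow> s (Suc i) = None)"

definition seq_take :: "nat \<Rightarrow> (nat \<Rightarrow> 'l option) \<Rightarrow> (nat \<Rightarrow> 'l option)" where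
  "seq_take n s = (\<lambda>i. if i < n then s i else None)"

definition frame_traces :: "('d loc \<Rightarrow> (nat \<Rightarrow> ('d chan \<times> 'v) option) set) \<Rightarrow> bool" where
  "frame_traces tr \<longleftrightarrow> (\<forall>l. \<forall>t\<in>tr l. is_seq t \<and>
      (\<forall>i lab. t i = Some lab \<longrightarrow> fst lab \<in> incident l) \<and>
      (\<forall>n. seq_take n t \<in> tr l))"

type_synonym 'e sys = "'e set \<times> ('e \<times> 'e) set"

definition is_sys :: "'e sys \<Rightarrow> bool" where
  "is_sys A \<longleftrightarrow> partial_order_on (fst A) (snd A) \<and>
     (\<forall>e\<in>fst A. finite {e'. (e', e) \<in> snd A})"

definition restr :: "('e \<Rightarrow> 'c) \<Rightarrow> 'e sys \<Rightarrow> 'c set \<Rightarrow> 'e sys" where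
  "restr chan A C = (let B' = {e\<in>fst A. chan e \<in> C} in (B', snd A \<inter> (B' \<times> B')))"

definition evs_at :: "('e \<Rightarrow> 'd chan) \<Rightarrow> 'e sys \<Rightarrow> 'd loc \<Rightarrow> 'e set" where
  "evs_at chan A l = {e\<in>fst A. chan e \<in> incident l}"

text \<open>The label sequence of the events at a location, enumerated along the order:
  the n-th event is the one with exactly n strict predecessors.\<close>
definition label_seq :: "('e \<Rightarrow> 'd chan) \<Rightarrow> ('e \<Rightarrow> 'v) \<Rightarrow> 'e sys \<Rightarrow> 'd loc
     \<Rightarrow> nat \<Rightarrow> ('d chan \<times> 'v) option" where
  "label_seq chan msg A l n =
     (let S = evs_at chan A l;
          P = (\<lambda>e. card {e'\<in>S. (e', e) \<in> snd A \<and> e' \<noteq> e})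
      in if \<exists>e\<in>S. P e = n
         then Some (chan (THE e. e \<in> S \<and> P e = n), msg (THE e. e \<in> S \<and> P e = n))
         else None)"

definition exec :: "('e \<Rightarrow> 'd chan) \<Rightarrow> ('e \<Rightarrow> 'v)
     \<Rightarrow> ('d loc \<Rightarrow> (nat \<Rightarrow> ('d chan \<times> 'v) option) set) \<Rightarrow> 'e sys set" where
  "exec chan msg tr = {A. is_sys A \<and>
     (\<forall>l. total_on (evs_at chan A l) (snd A) \<and> label_seq chan msg A l \<in> tr l)}"

definition Jset :: "('e \<Rightarrow> 'd chan) \<Rightarrow> ('e \<Rightarrow> 'v)
     \<Rightarrow> ('d loc \<Rightarrow> (nat \<Rightarrow> ('d chan \<times> 'v) option) set)
     \<Rightarrow> 'd chan set \<Rightarrow> 'd chan set \<Rightarrow> 'e sys \<Rightarrow> 'e sys set" where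
  "Jset chan msg tr C C' B = {restr chan A C' | A. A \<in> exec chan msg tr \<and> restr chan A C = B}"

definition Cdom :: "'d \<Rightarrow> 'd chan set" where
  "Cdom i = {CIn i, COut i}"

definition vis :: "('d \<Rightarrow> 'd \<Rightarrow> bool) \<Rightarrow> 'd \<Rightarrow> 'd chan set" where
  "vis intf i = {CIn j | j. intf j i}"

definition INch :: "'d chan set" where
  "INch = range CIn"

definition is_purge :: "('e \<Rightarrow> 'd chan) \<Rightarrow> ('e \<Rightarrow> 'v)
     \<Rightarrow> ('d loc \<Rightarrow> (nat \<Rightarrow> ('d chan \<times> 'v) option) set)
     \<Rightarrow> ('d \<Rightarrow> 'd \<Rightarrow> bool) \<Rightarrow> 'd \<Rightarrow> ('e sys \<Rightarrow> 'x) \<Rightarrow> bool" where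
  "is_purge chan msg tr intf i p \<longleftrightarrow>
     (\<forall>A\<in>exec chan msg tr. \<forall>A'\<in>exec chan msg tr.
        restr chan A INch = restr chan A' INch \<longrightarrow> p A = p A') \<and>
     (\<forall>A\<in>exec chan msg tr. \<forall>A'\<in>exec chan msg tr.
        p A = p A' \<longrightarrow> restr chan A (vis intf i) = restr chan A' (vis intf i))"

definition NI :: "('e \<Rightarrow> 'd chan) \<Rightarrow> ('e \<Rightarrow> 'v)
     \<Rightarrow> ('d loc \<Rightarrow> (nat \<Rightarrow> ('d chan \<times> 'v) option) set)
     \<Rightarrow> 'd \<Rightarrow> ('e sys \<Rightarrow> 'x) \<Rightarrow> bool" where
  "NI chan msg tr i p \<longleftrightarrow>
     (\<forall>A\<in>exec chan msg tr. \<forall>A'\<in>exec chan msg tr.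
        p A = p A' \<longrightarrow> restr chan A (Cdom i) = restr chan A' (Cdom i))"

definition ND :: "('e \<Rightarrow> 'd chan) \<Rightarrow> ('e \<Rightarrow> 'v)
     \<Rightarrow> ('d loc \<Rightarrow> (nat \<Rightarrow> ('d chan \<times> 'v) option) set)
     \<Rightarrow> 'd \<Rightarrow> ('e sys \<Rightarrow> 'x) \<Rightarrow> bool" where
  "ND chan msg tr i p \<longleftrightarrow>
     (\<forall>A\<in>exec chan msg tr. \<forall>A'\<in>exec chan msg tr.
        p A = p A' \<longrightarrow>
        restr chan A' INch \<in> Jset chan msg tr (Cdom i) INch (restr chan A (Cdom i)))"

end

theory Submission
  imports Defs
begin

text \<open>Each execution witnesses its own input projection: if \<open>p A = p A'\<close>, noninterference
  makes \<open>A'\<close> agree with \<open>A\<close> on the channels of \<open>d\<^sub>i\<close>, so \<open>A'\<close> itself is a compatible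
  execution and its inputs are among the deducible ones.\<close>

lemma restr_mem_Jset:
  assumes "A \<in> exec chan msg tr" and "restr chan A C = B"
  shows "restr chan A C' \<in> Jset chan msg tr C C' B"
  using assms unfolding Jset_def by blast

lemma NI_imp_ND:
  assumes "NI chan msg tr i p"
  shows "ND chan msg tr i p"
  unfolding ND_def
proof (intro ballI impI)
  fix A A' assume A: "A \<in> exec chan msg tr" and A': "A' \<in> exec chan msg tr" and "p A = p A'"
  with assms have "restr chan A' (Cdom i) = restr chan A (Cdom i)"
    unfolding NI_def by metis
  with A' show "restr chan A' INch \<in> Jset chan msg tr (Cdom i) INch (restr chan A (Cdom i))"
    by (rule restr_mem_Jset)
qed

theorem lemma9:
  fixes chan :: "'e \<Rightarrow> ('d::finite) chan" and msg :: "'e \<Rightarrow> 'v"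
    and tr :: "'d loc \<Rightarrow> (nat \<Rightarrow> ('d chan \<times> 'v) option) set"
    and intf :: "'d \<Rightarrow> 'd \<Rightarrow> bool" and i :: 'd and p :: "'e sys \<Rightarrow> 'x"
  assumes "frame_traces tr"
    and "reflp intf"
    and "is_purge chan msg tr intf i p"
    and "NI chan msg tr i p"
  shows "ND chan msg tr i p"
  using assms(4) by (rule NI_imp_ND)

end
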